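(* Let $p,q\in\mathbb{N}$, $\alpha_1,\dots,\alpha_p,\beta_1,\dots,\beta_q\in\mathbb{R}$, $A_1,\dots,A_p,B_1,\dots,B_q>0$, with $\sum_{k=1}^q\beta_k-\sum_{j=1}^p\alpha_j+\frac{p-q}{2}>0$ and $\sum_{j=1}^pA_j=\sum_{k=1}^qB_k$, and with $\psi_{n,m}=\frac{\prod_{i=1}^p\Gamma(\alpha_i+(n+m)A_i)}{\prod_{j=1}^q\Gamma(\beta_j+(n+m)B_j)}$ satisfying $\psi_{n,2}<\psi_{n,1}$ and $\psi_{n,1}^2<\psi_{n,0}\psi_{n,2}$ for all $n\in\mathbb{N}_0$. For $\sigma>0$ and $z\in(0,1)$ let $\Xi(\sigma)=\Xi_z(\sigma)={}_{p+1}\Psi_q\Big[_{(\beta_1,B_1),\dots,(\beta_q,B_q)}^{(\sigma,1),(\alpha_1,A_1),\dots,(\alpha_p,A_p)}\Big|z\Big]$. Then for each $z\in(0,1)$ the function $\sigma\mapsto\Xi(\sigma)$ is log-convex on $(0,\infty)$, and $$\Xi(\sigma)\,\Xi(\sigma+2)-\Xi(\sigma+1)^2\ge0$$ for all $\sigma\in(0,\infty)$ and $z\in(0,1)$.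
   Context: The Fox-Wright function with parameters $(a_i,C_i)_{i=1}^{r}$ upstairs and $(b_j,D_j)_{j=1}^s$ downstairs ($C_i,D_j>0$) is ${}_r\Psi_s\Big[_{(b_1,D_1),\dots,(b_s,D_s)}^{(a_1,C_1),\dots,(a_r,C_r)}\Big|z\Big]=\sum_{k=0}^\infty\frac{\prod_{i=1}^r\Gamma(a_i+kC_i)}{\prod_{j=1}^s\Gamma(b_j+kD_j)}\frac{z^k}{k!}$. *)

theory Defs
  imports "HOL-Analysis.Analysis"
begin

definition fox_wright :: "(real \<times> real) list \<Rightarrow> (real \<times> real) list \<Rightarrow> real \<Rightarrow> real" where
  "fox_wright as bs z =
     (\<Sum>k. (\<Prod>(a, c)\<leftarrow>as. Gamma (a + real k * c)) / (\<Prod>(b, d)\<leftarrow>bs. Gamma (b + real k * d))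
            * z ^ k / fact k)"

definition log_convex_on :: "real set \<Rightarrow> (real \<Rightarrow> real) \<Rightarrow> bool" where
  "log_convex_on S f \<longleftrightarrow> (\<forall>x\<in>S. f x > 0) \<and> convex_on S (\<lambda>x. ln (f x))"

end

theory Submission
  imports Defs "HOL-Real_Asymp.Real_Asymp"
begin

text \<open>Writing \<open>\<psi>\<^sub>k\<close> for the Gamma quotient, \<open>\<Xi>(\<sigma>) = \<Sum>\<^sub>k \<psi>\<^sub>k z\<^sup>k / k! \<cdot> \<Gamma>(\<sigma> + k)\<close>.
  The Turan inequalities for \<open>\<psi>\<close>, together with the fact that \<open>\<psi>\<^sub>k > 0\<close> for large \<open>k\<close>,
  force every \<open>\<psi>\<^sub>k\<close> to be positive, and \<open>\<psi>\<^sub>2 > \<psi>\<^sub>3 > \<dots>\<close> makes \<open>\<psi>\<close> bounded, so the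
  series converges for \<open>0 < z < 1\<close> by comparison with \<open>\<Sum> z\<^sup>k \<Gamma>(\<sigma> + k) / k!\<close>.
  Each \<open>\<sigma> \<mapsto> \<Gamma>(\<sigma> + k)\<close> is log-convex, and Holder's inequality shows that a positive
  combination of log-convex functions is log-convex. The Turan-type inequality for \<open>\<Xi>\<close> is
  midpoint log-convexity at \<open>\<sigma>\<close> and \<open>\<sigma> + 2\<close>.\<close>

lemma prod_list_map_upt_Suc_eq_prod:
  "prod_list (map f [1..<n+1]) = (\<Prod>i=1..n. f i)"
  by (induction n) (auto simp: atLeastAtMostSuc_conv mult.commute)

lemma prod_list_map_pairs_upt_Suc_eq_prod:
  "(\<Prod>(a, c)\<leftarrow>map (\<lambda>i. (f i, g i)) [1..<n+1]. h a c) = (\<Prod>i=1..n. h (f i) (g i))"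
  by (simp only: map_map prod_list_map_upt_Suc_eq_prod) (simp add: o_def)

lemma eventually_affine_pos:
  fixes a b :: real
  assumes "a > 0"
  shows "eventually (\<lambda>k. b + real k * a > 0) sequentially"
proof -
  have "b + real k * a > 0" if "k \<ge> nat \<lceil>- b / a\<rceil> + 1" for k
  proof -
    from that have "real k > - b / a" by linarith
    with assms show ?thesis by (simp add: field_simps)
  qed
  then show ?thesis unfolding eventually_sequentially by blast
qed

text \<open>A negative term would propagate along \<open>n, n + 2, n + 4, \<dots>\<close>, since the Turan inequality
  makes \<open>f n\<close> and \<open>f (n + 2)\<close> of the same strict sign.\<close>

lemma pos_if_strict_Turan_and_eventually_pos:
  fixes f :: "nat \<Rightarrow> real"
  assumes Turan: "\<And>n. (f (n+1))\<^sup>2 < f n * f (n+2)"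
    and ev: "eventually (\<lambda>k. f k > 0) sequentially"
  shows "f n > 0"
proof (rule ccontr)
  assume "\<not> f n > 0"
  have same_sign: "0 < f m * f (m+2)" for m
    using Turan[of m] by (smt (verit) zero_le_power2)
  have neg: "f (n + 2 * m) < 0" for m
  proof (induction m)
    case 0
    with same_sign[of n] \<open>\<not> f n > 0\<close> show ?case by (auto simp: zero_less_mult_iff)
  next
    case (Suc m)
    with same_sign[of "n + 2 * m"] show ?case by (auto simp: zero_less_mult_iff)
  qed
  from ev obtain N where N: "\<And>k. k \<ge> N \<Longrightarrow> f k > 0"
    by (auto simp: eventually_sequentially)
  from neg[of N] N[of "n + 2 * N"] show False by simp
qed

lemma le_max_if_decreasing_from_one:
  fixes f :: "nat \<Rightarrow> real"
  assumes "\<And>n. f (n+2) < f (n+1)"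
  shows "f k \<le> max (f 0) (f 1)"
proof -
  have "f (Suc n) \<le> f 1" for n
  proof (induction n)
    case (Suc n)
    with assms[of n] show ?case by simp
  qed simp
  then show ?thesis by (cases k) (auto intro: max.coboundedI2)
qed

lemma summable_power_Gamma_shift:
  fixes z w :: real
  assumes z: "0 < z" "z < 1" and w: "w > 0"
  shows "summable (\<lambda>k. z ^ k * Gamma (w + real k) / fact k)"
proof -
  define h where "h k = z ^ k * Gamma (w + real k) / fact k" for k
  have h_pos: "h k > 0" for k
    unfolding h_def using z w by (intro divide_pos_pos mult_pos_pos) auto
  have h_Suc: "h (Suc k) = (z * (w + real k) / (real k + 1)) * h k" for k
  proof -
    have "w + real k \<notin> \<int>\<^sub>\<le>\<^sub>0"
      using w nonpos_Ints_nonpos by fastforce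
    then have "Gamma (w + real (Suc k)) = (w + real k) * Gamma (w + real k)"
      using Gamma_plus1[of "w + real k"] by (simp add: add_ac)
    then show ?thesis unfolding h_def by (simp add: field_simps)
  qed
  have "(\<lambda>k. z * (w + real k) / (real k + 1)) \<longlonglongrightarrow> z" by real_asymp
  then have "eventually (\<lambda>k. z * (w + real k) / (real k + 1) < (1 + z) / 2) sequentially"
    by (rule order_tendstoD(2)) (use z in simp)
  then obtain N where N: "\<And>k. k \<ge> N \<Longrightarrow> z * (w + real k) / (real k + 1) < (1 + z) / 2"
    by (auto simp: eventually_sequentially)
  have "summable h"
  proof (rule summable_ratio_test[of "(1 + z) / 2" N])
    show "(1 + z) / 2 < 1" using z by simp
    fix n assume "n \<ge> N"
    then have "h (Suc n) \<le> (1 + z) / 2 * h n"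
      unfolding h_Suc using N[of n] h_pos[of n] by (intro mult_right_mono) auto
    then show "norm (h (Suc n)) \<le> (1 + z) / 2 * norm (h n)"
      using h_pos[of n] h_pos[of "Suc n"] by simp
  qed
  then show ?thesis unfolding h_def .
qed

lemma summable_bounded_coeff_Gamma_series:
  fixes z w M :: real and \<psi> :: "nat \<Rightarrow> real"
  assumes z: "0 < z" "z < 1" and w: "w > 0"
    and \<psi>: "\<And>k. 0 \<le> \<psi> k" "\<And>k. \<psi> k \<le> M"
  shows "summable (\<lambda>k. \<psi> k * z ^ k / fact k * Gamma (w + real k))"
proof (rule summable_comparison_test[OF _ summable_mult[OF summable_power_Gamma_shift[OF z w]]])
  have "norm (\<psi> k * z ^ k / fact k * Gamma (w + real k))
      \<le> M * (z ^ k * Gamma (w + real k) / fact k)" for k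
  proof -
    have "Gamma (w + real k) > 0" using w by simp
    then have nonneg: "0 \<le> z ^ k * Gamma (w + real k) / fact k"
      using z by simp
    have "norm (\<psi> k * z ^ k / fact k * Gamma (w + real k))
        = \<psi> k * (z ^ k * Gamma (w + real k) / fact k)"
      using \<open>Gamma (w + real k) > 0\<close> z \<psi>(1)[of k] by (simp add: abs_mult)
    also have "\<dots> \<le> M * (z ^ k * Gamma (w + real k) / fact k)"
      using nonneg \<psi>(2)[of k] by (rule mult_right_mono[rotated])
    finally show ?thesis .
  qed
  then show "\<exists>N. \<forall>k\<ge>N. norm (\<psi> k * z ^ k / fact k * Gamma (w + real k))
      \<le> M * (z ^ k * Gamma (w + real k) / fact k)" by blast
qed

lemma Hoelder_suminf:
  fixes a b c m :: "nat \<Rightarrow> real" and t :: real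
  assumes c: "\<And>k. c k > 0" and a: "\<And>k. a k > 0" and b: "\<And>k. b k > 0"
    and sa: "summable (\<lambda>k. c k * a k)" and sb: "summable (\<lambda>k. c k * b k)"
    and t: "0 < t" "t < 1"
    and m: "\<And>k. 0 \<le> m k" "\<And>k. m k \<le> a k powr (1 - t) * b k powr t"
  shows "summable (\<lambda>k. c k * m k)"
    and "(\<Sum>k. c k * m k) \<le> (\<Sum>k. c k * a k) powr (1 - t) * (\<Sum>k. c k * b k) powr t"
proof -
  define X where "X = (\<Sum>k. c k * a k)"
  define Y where "Y = (\<Sum>k. c k * b k)"
  have X: "X > 0" unfolding X_def by (rule suminf_pos[OF sa]) (simp add: a c)
  have Y: "Y > 0" unfolding Y_def by (rule suminf_pos[OF sb]) (simp add: b c)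
  define K where "K = X powr (1 - t) * Y powr t"
  define g where "g k = ((1 - t) / X) * (c k * a k) + (t / Y) * (c k * b k)" for k
  have sg: "summable g"
    unfolding g_def by (intro summable_add summable_mult sa sb)
  have "(\<Sum>k. g k) = (\<Sum>k. ((1 - t) / X) * (c k * a k)) + (\<Sum>k. (t / Y) * (c k * b k))"
    unfolding g_def by (intro suminf_add[symmetric] summable_mult sa sb)
  also have "\<dots> = ((1 - t) / X) * X + (t / Y) * Y"
    unfolding X_def Y_def by (simp only: suminf_mult[OF sa] suminf_mult[OF sb])
  finally have g_sum: "(\<Sum>k. g k) = 1" using X Y by simp
  \<comment> \<open>Young's inequality applied to the normalised terms \<open>a k / X\<close> and \<open>b k / Y\<close>\<close>
  have le: "c k * m k \<le> K * g k" for k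
  proof -
    have "a k powr (1 - t) * b k powr t = K * ((a k / X) powr (1 - t) * (b k / Y) powr t)"
      using X Y a[of k] b[of k] unfolding K_def by (simp add: powr_divide field_simps)
    also have "\<dots> \<le> K * ((1 - t) * (a k / X) + t * (b k / Y))"
      using X Y a[of k] b[of k] t unfolding K_def
      by (intro mult_left_mono Youngs_inequality_0) auto
    finally have "c k * m k \<le> c k * (K * ((1 - t) * (a k / X) + t * (b k / Y)))"
      using m(2)[of k] c[of k] by (intro mult_left_mono) auto
    then show ?thesis by (simp add: g_def algebra_simps)
  qed
  have sKg: "summable (\<lambda>k. K * g k)" by (intro summable_mult sg)
  show s: "summable (\<lambda>k. c k * m k)"
    by (rule summable_comparison_test[OF _ sKg])
       (use le c m(1) in \<open>auto intro!: exI[of _ 0] simp: abs_of_nonneg less_imp_le\<close>)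
  have "(\<Sum>k. c k * m k) \<le> (\<Sum>k. K * g k)" by (rule suminf_le[OF le s sKg])
  also have "\<dots> = K" using sg g_sum by (simp add: suminf_mult)
  finally show "(\<Sum>k. c k * m k) \<le> X powr (1 - t) * Y powr t" unfolding K_def .
qed

lemma Gamma_convex_comb_le_powr:
  fixes x y t :: real
  assumes "x > 0" "y > 0" "0 < t" "t < 1"
  shows "Gamma ((1 - t) * x + t * y) \<le> Gamma x powr (1 - t) * Gamma y powr t"
proof -
  have "(1 - t) * x + t * y > 0"
    using assms by (smt (verit) mult_pos_pos)
  then have pos: "Gamma x > 0" "Gamma y > 0" "Gamma ((1 - t) * x + t * y) > 0"
    using assms by auto
  have "ln (Gamma ((1 - t) * x + t * y)) \<le> (1 - t) * ln (Gamma x) + t * ln (Gamma y)"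
    using convex_onD[OF log_convex_Gamma_real, of t x y] assms by simp
  then have "exp (ln (Gamma ((1 - t) * x + t * y)))
      \<le> exp ((1 - t) * ln (Gamma x) + t * ln (Gamma y))" by simp
  with pos show ?thesis by (simp add: powr_def exp_add mult.commute)
qed

lemma log_convex_on_if_powr_le:
  fixes f :: "real \<Rightarrow> real"
  assumes "convex S" and pos: "\<And>x. x \<in> S \<Longrightarrow> f x > 0"
    and le: "\<And>x y t. x \<in> S \<Longrightarrow> y \<in> S \<Longrightarrow> 0 < t \<Longrightarrow> t < 1 \<Longrightarrow>
      f ((1 - t) * x + t * y) \<le> f x powr (1 - t) * f y powr t"
  shows "log_convex_on S f"
  unfolding log_convex_on_def
proof (intro conjI ballI pos)
  show "convex_on S (\<lambda>x. ln (f x))"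
  proof (rule convex_onI)
    fix t x y :: real
    assume t: "0 < t" "t < 1" and xy: "x \<in> S" "y \<in> S"
    have "(1 - t) * x + t * y \<in> S"
      using convexD[OF \<open>convex S\<close> xy, of "1 - t" t] t by simp
    then have "ln (f ((1 - t) * x + t * y)) \<le> ln (f x powr (1 - t) * f y powr t)"
      using le[OF xy t] pos xy by (intro ln_mono) auto
    also have "\<dots> = (1 - t) * ln (f x) + t * ln (f y)"
      using pos[OF xy(1)] pos[OF xy(2)] by (simp add: ln_mult ln_powr)
    finally show "ln (f ((1 - t) *\<^sub>R x + t *\<^sub>R y)) \<le> (1 - t) * ln (f x) + t * ln (f y)"
      by simp
  qed (rule \<open>convex S\<close>)
qed

lemma log_convex_on_Gamma_series:
  fixes c :: "nat \<Rightarrow> real"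
  assumes c: "\<And>k. c k > 0"
    and summ: "\<And>w. w > 0 \<Longrightarrow> summable (\<lambda>k. c k * Gamma (w + real k))"
  shows "log_convex_on {0<..} (\<lambda>w. \<Sum>k. c k * Gamma (w + real k))"
proof (rule log_convex_on_if_powr_le)
  fix w :: real assume "w \<in> {0<..}"
  then show "(\<Sum>k. c k * Gamma (w + real k)) > 0"
    using c summ by (intro suminf_pos) auto
next
  fix x y t :: real
  assume xy: "x \<in> {0<..}" "y \<in> {0<..}" and t: "0 < t" "t < 1"
  have "Gamma ((1 - t) * x + t * y + real k)
      \<le> Gamma (x + real k) powr (1 - t) * Gamma (y + real k) powr t" for k
    using Gamma_convex_comb_le_powr[of "x + real k" "y + real k" t] xy t
    by (simp add: algebra_simps)
  moreover have "(1 - t) * x + t * y > 0"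
    using xy t by (smt (verit) mult_pos_pos greaterThan_iff)
  ultimately show "(\<Sum>k. c k * Gamma ((1 - t) * x + t * y + real k))
      \<le> (\<Sum>k. c k * Gamma (x + real k)) powr (1 - t) * (\<Sum>k. c k * Gamma (y + real k)) powr t"
    using xy t by (intro Hoelder_suminf(2) c summ less_imp_le[OF Gamma_real_pos]) auto
qed (simp add: convex_real_interval)

lemma Turan_if_log_convex_on:
  fixes f :: "real \<Rightarrow> real" and \<sigma> :: real
  assumes "log_convex_on {0<..} f" and "\<sigma> > 0"
  shows "f \<sigma> * f (\<sigma> + 2) - (f (\<sigma> + 1))\<^sup>2 \<ge> 0"
proof -
  have pos: "f \<sigma> > 0" "f (\<sigma> + 2) > 0" "f (\<sigma> + 1) > 0"
    using assms unfolding log_convex_on_def by auto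
  have mid: "\<sigma> + 1 = (1 - 1/2) *\<^sub>R \<sigma> + (1/2) *\<^sub>R (\<sigma> + 2)"
    by (simp add: field_simps)
  have "ln (f (\<sigma> + 1)) \<le> (1 - 1/2) * ln (f \<sigma>) + 1/2 * ln (f (\<sigma> + 2))"
    using assms unfolding log_convex_on_def by (subst mid, intro convex_onD) auto
  then have "ln (f (\<sigma> + 1) ^ 2) \<le> ln (f \<sigma> * f (\<sigma> + 2))"
    using pos by (simp add: ln_mult ln_realpow field_simps)
  with pos show ?thesis by simp
qed

theorem theorem5:
  fixes p q :: nat and \<alpha> A :: "nat \<Rightarrow> real" and \<beta> B :: "nat \<Rightarrow> real"
  assumes A_pos: "\<forall>i\<in>{1..p}. A i > 0"
    and B_pos: "\<forall>j\<in>{1..q}. B j > 0"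
    and balance: "(\<Sum>k=1..q. \<beta> k) - (\<Sum>j=1..p. \<alpha> j) + (real p - real q) / 2 > 0"
    and sumeq: "(\<Sum>j=1..p. A j) = (\<Sum>k=1..q. B k)"
    and psi21: "\<forall>n::nat.
        (\<Prod>i=1..p. Gamma (\<alpha> i + real (n+2) * A i)) / (\<Prod>j=1..q. Gamma (\<beta> j + real (n+2) * B j))
      < (\<Prod>i=1..p. Gamma (\<alpha> i + real (n+1) * A i)) / (\<Prod>j=1..q. Gamma (\<beta> j + real (n+1) * B j))"
    and psi_turan: "\<forall>n::nat.
        ((\<Prod>i=1..p. Gamma (\<alpha> i + real (n+1) * A i)) / (\<Prod>j=1..q. Gamma (\<beta> j + real (n+1) * B j)))\<^sup>2
      < ((\<Prod>i=1..p. Gamma (\<alpha> i + real n * A i)) / (\<Prod>j=1..q. Gamma (\<beta> j + real n * B j)))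
        * ((\<Prod>i=1..p. Gamma (\<alpha> i + real (n+2) * A i)) / (\<Prod>j=1..q. Gamma (\<beta> j + real (n+2) * B j)))"
  defines "\<Xi> \<equiv> (\<lambda>z \<sigma>. fox_wright ((\<sigma>, 1) # map (\<lambda>i. (\<alpha> i, A i)) [1..<p+1])
                                 (map (\<lambda>j. (\<beta> j, B j)) [1..<q+1]) z)"
  shows "(\<forall>z\<in>{0<..<1}. log_convex_on {0<..} (\<Xi> z))
    \<and> (\<forall>\<sigma>>0. \<forall>z\<in>{0<..<1}. \<Xi> z \<sigma> * \<Xi> z (\<sigma> + 2) - (\<Xi> z (\<sigma> + 1))\<^sup>2 \<ge> 0)"
proof -
  define \<psi> where "\<psi> k = (\<Prod>i=1..p. Gamma (\<alpha> i + real k * A i))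
    / (\<Prod>j=1..q. Gamma (\<beta> j + real k * B j))" for k :: nat
  have "eventually (\<lambda>k. (\<forall>i\<in>{1..p}. \<alpha> i + real k * A i > 0)
      \<and> (\<forall>j\<in>{1..q}. \<beta> j + real k * B j > 0)) sequentially"
    using A_pos B_pos by (intro eventually_conj eventually_ball_finite ballI eventually_affine_pos) auto
  then have "eventually (\<lambda>k. \<psi> k > 0) sequentially"
    by eventually_elim (auto simp: \<psi>_def intro!: divide_pos_pos prod_pos)
  then have \<psi>_pos: "\<psi> k > 0" for k
    using psi_turan by (intro pos_if_strict_Turan_and_eventually_pos) (auto simp: \<psi>_def)
  have \<psi>_bound: "\<psi> k \<le> max (\<psi> 0) (\<psi> 1)" for k
    using psi21 by (intro le_max_if_decreasing_from_one) (auto simp: \<psi>_def)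
  have \<Xi>_eq: "\<Xi> z = (\<lambda>w. \<Sum>k. \<psi> k * z ^ k / fact k * Gamma (w + real k))" for z
    unfolding \<Xi>_def fox_wright_def \<psi>_def
    by (intro ext suminf_cong)
      (simp only: prod_list_map_pairs_upt_Suc_eq_prod list.map prod_list.Cons, simp)
  have log_convex: "log_convex_on {0<..} (\<Xi> z)" if "z \<in> {0<..<1}" for z
    unfolding \<Xi>_eq using that \<psi>_pos \<psi>_bound
    by (intro log_convex_on_Gamma_series summable_bounded_coeff_Gamma_series) (auto intro: less_imp_le)
  then show ?thesis by (blast intro: Turan_if_log_convex_on)
qed

end
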